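(* Let $K=1$ and fix a reflection matrix $\mathbf\Phi$ such that (SDR1.2) has an optimal solution. Then problem (P1.1) has an optimal solution $(\mathbf w_1,\mathbf R_0)$ whose dedicated sensing covariance lies in the null space of the user channel, i.e. $\mathbf h_1^H\mathbf R_0\mathbf h_1=0$.
   Context: Let $M,N\ge1$ be integers and $K=1$. Fixed data: $\mathbf G\in\mathbb C^{N\times M}$, $\mathbf h_{\mathrm d,1}\in\mathbb C^{M}$, $\mathbf h_{\mathrm r,1}\in\mathbb C^{N}$, threshold $\Gamma_1>0$, noise power $\sigma_1^2>0$, power budget $P_0>0$. A reflection matrix is $\mathbf\Phi=\mathrm{diag}(\mathbf v)$ with $\mathbf v\in\mathbb C^N$, $|v_n|=1$ for all $n$; put $\mathbf h_1=\mathbf h_{\mathrm d,1}+\mathbf G^H\mathbf\Phi^H\mathbf h_{\mathrm r,1}$ and $\mathbf H_1=\mathbf h_1\mathbf h_1^H$. The Type-I SINR is $\gamma_1^{\mathrm I}=|\mathbf h_1^H\mathbf w_1|^2/(\mathbf h_1^H\mathbf R_0\mathbf h_1+\sigma_1^2)$ for $\mathbf w_1\in\mathbb C^M$ and Hermitian $\mathbf R_0\succeq\mathbf 0$. For Hermitian $\mathbf X\succeq\mathbf 0$ define $f(\mathbf X)=\mathrm{tr}\big((\mathbf G\mathbf X\mathbf G^H)^{-1}\big)$ if $\mathbf G\mathbf X\mathbf G^H$ is invertible and $+\infty$ otherwise. Problem (P1.1): minimize $f(\mathbf w_1\mathbf w_1^H+\mathbf R_0)$ over $\mathbf w_1,\mathbf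 R_0\succeq\mathbf 0$ subject to $\gamma_1^{\mathrm I}\ge\Gamma_1$ and $\|\mathbf w_1\|^2+\mathrm{tr}(\mathbf R_0)\le P_0$. Problem (SDR1.2): minimize $f(\mathbf W_1+\mathbf R_0)$ over Hermitian $\mathbf W_1\succeq\mathbf 0,\mathbf R_0\succeq\mathbf 0$ subject to $(1+\tfrac1{\Gamma_1})\mathrm{tr}(\mathbf H_1\mathbf W_1)-\mathrm{tr}(\mathbf H_1(\mathbf W_1+\mathbf R_0))\ge\sigma_1^2$ and $\mathrm{tr}(\mathbf W_1)+\mathrm{tr}(\mathbf R_0)\le P_0$. *)

theory Defs
  imports "HOL-Analysis.Analysis"
begin

text \<open>Complex vectors/matrices as Cartesian-product types.  A matrix
  of type complex^'c^'r has rows indexed by 'r and columns by 'c.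
  M antennas correspond to the index type 'm, N RIS elements to 'n.\<close>

definition cadj :: "complex^'c^'r \<Rightarrow> complex^'r^'c" where
  "cadj A = (\<chi> i j. cnj (A $ j $ i))"

definition cvinner :: "complex^'n \<Rightarrow> complex^'n \<Rightarrow> complex" where
  "cvinner x y = (\<Sum>i\<in>UNIV. cnj (x $ i) * y $ i)"

definition outer :: "complex^'n \<Rightarrow> complex^'n^'n" where
  "outer w = (\<chi> i j. w $ i * cnj (w $ j))"

definition hermitian :: "complex^'n^'n \<Rightarrow> bool" where
  "hermitian X \<longleftrightarrow> cadj X = X"

definition psd :: "complex^'n^'n \<Rightarrow> bool" where
  "psd X \<longleftrightarrow> hermitian X \<and> (\<forall>x. 0 \<le> Re (cvinner x (X *v x)))"

definition cvnorm2 :: "complex^'n \<Rightarrow> real" where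
  "cvnorm2 w = (\<Sum>i\<in>UNIV. (cmod (w $ i))\<^sup>2)"

definition reflection :: "complex^'n \<Rightarrow> complex^'n^'n" where
  "reflection v = (\<chi> i j. if i = j then v $ i else 0)"

definition eff_channel ::
  "complex^'m^'n \<Rightarrow> complex^'m \<Rightarrow> complex^'n \<Rightarrow> complex^'n \<Rightarrow> complex^'m" where
  "eff_channel G hd1 hr1 v = hd1 + cadj G *v (cadj (reflection v) *v hr1)"

definition fobj :: "complex^'m^'n \<Rightarrow> complex^'m^'m \<Rightarrow> ereal" where
  "fobj G X = (if invertible (G ** X ** cadj G)
               then ereal (Re (trace (matrix_inv (G ** X ** cadj G)))) else \<infinity>)"

definition P11_feasible ::
  "complex^'m \<Rightarrow> real \<Rightarrow> real \<Rightarrow> real \<Rightarrow> complex^'m \<Rightarrow> complex^'m^'m \<Rightarrow> bool" where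
  "P11_feasible h \<Gamma> \<sigma>2 P0 w R0 \<longleftrightarrow>
     psd R0 \<and>
     (cmod (cvinner h w))\<^sup>2 / (Re (cvinner h (R0 *v h)) + \<sigma>2) \<ge> \<Gamma> \<and>
     cvnorm2 w + Re (trace R0) \<le> P0"

definition SDR12_feasible ::
  "complex^'m \<Rightarrow> real \<Rightarrow> real \<Rightarrow> real \<Rightarrow> complex^'m^'m \<Rightarrow> complex^'m^'m \<Rightarrow> bool" where
  "SDR12_feasible h \<Gamma> \<sigma>2 P0 W1 R0 \<longleftrightarrow>
     psd W1 \<and> psd R0 \<and>
     (1 + 1 / \<Gamma>) * Re (trace (outer h ** W1)) - Re (trace (outer h ** (W1 + R0))) \<ge> \<sigma>2 \<and>
     Re (trace W1) + Re (trace R0) \<le> P0"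

end

theory Submission
  imports Defs
begin

text \<open>The semidefinite relaxation is tight.  A feasible point \<open>(w, R\<^sub>0)\<close> of (P1.1) gives the
  feasible point \<open>(w w\<^sup>H, R\<^sub>0)\<close> of (SDR1.2) with the same objective, since \<open>f\<close> only sees
  \<open>W\<^sub>1 + R\<^sub>0\<close>.  Conversely, for an optimal \<open>(W\<^sub>1, R\<^sub>0)\<close> of (SDR1.2) put \<open>X = W\<^sub>1 + R\<^sub>0\<close>,
  \<open>a = h\<^sup>H X h\<close> and \<open>w = X h / \<surd>a\<close>.  Then \<open>X - w w\<^sup>H\<close> is positive semidefinite (Cauchy-Schwarz
  for the semi-inner product given by \<open>X\<close>), it annihilates the quadratic form at \<open>h\<close>, and
  \<open>|h\<^sup>H w|\<^sup>2 = a \<ge> \<Gamma> \<sigma>\<^sup>2\<close> by the relaxed SINR constraint; as \<open>X\<close> and the trace are unchanged,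
  \<open>(w, X - w w\<^sup>H)\<close> is feasible and optimal for (P1.1).\<close>

lemma cvinner_commute: "cvinner x y = cnj (cvinner y x)"
  by (simp add: cvinner_def mult.commute)

lemma cvinner_add_right: "cvinner x (y + z) = cvinner x y + cvinner x z"
  by (simp add: cvinner_def sum.distrib algebra_simps)

lemma cvinner_diff_right: "cvinner x (y - z) = cvinner x y - cvinner x z"
  by (simp add: cvinner_def sum_subtractf algebra_simps)

lemma cvinner_diff_left: "cvinner (x - y) z = cvinner x z - cvinner y z"
  by (simp add: cvinner_def sum_subtractf algebra_simps)

lemma cvinner_scale_right: "cvinner x (c *s y) = c * cvinner x y"
  by (simp add: cvinner_def sum_distrib_left algebra_simps)

lemma cvinner_scale_left: "cvinner (c *s x) y = cnj c * cvinner x y"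
  by (simp add: cvinner_def sum_distrib_left algebra_simps)

lemma cvinner_self_mult: "cvinner x y * cvinner y x = complex_of_real ((cmod (cvinner x y))\<^sup>2)"
  by (metis cvinner_commute complex_norm_square)

lemma outer_mult_vector: "outer w *v y = cvinner w y *s w"
  by (simp add: outer_def cvinner_def matrix_vector_mult_def vector_scalar_mult_def
      vec_eq_iff sum_distrib_left mult_ac)

lemma cvinner_outer: "cvinner x (outer w *v y) = cvinner x w * cvinner w y"
  by (simp add: outer_mult_vector cvinner_scale_right mult.commute)

lemma trace_outer_mult: "trace (outer h ** A) = cvinner h (A *v h)"
proof -
  have "trace (outer h ** A) = (\<Sum>i\<in>UNIV. \<Sum>k\<in>UNIV. cnj (h$k) * (A$k$i * h$i))"
    by (simp add: trace_def matrix_matrix_mult_def outer_def mult_ac)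
  also have "\<dots> = (\<Sum>k\<in>UNIV. \<Sum>i\<in>UNIV. cnj (h$k) * (A$k$i * h$i))"
    by (rule sum.swap)
  finally show ?thesis
    by (simp add: cvinner_def matrix_vector_mult_def sum_distrib_left)
qed

lemma Re_trace_outer: "Re (trace (outer w)) = cvnorm2 w"
  by (simp add: trace_def outer_def cvnorm2_def complex_mult_cnj cmod_def)

lemma hermitian_cvinner_swap:
  assumes "hermitian A"
  shows "cvinner y (A *v x) = cnj (cvinner x (A *v y))"
proof -
  have A: "cnj (A$i$j) = A$j$i" for i j
    using assms unfolding hermitian_def cadj_def by (metis vec_lambda_beta)
  have "cnj (cvinner x (A *v y)) = (\<Sum>i\<in>UNIV. \<Sum>j\<in>UNIV. x$i * (cnj (A$i$j) * cnj (y$j)))"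
    by (simp add: cvinner_def matrix_vector_mult_def sum_distrib_left)
  also have "\<dots> = (\<Sum>j\<in>UNIV. \<Sum>i\<in>UNIV. x$i * (A$j$i * cnj (y$j)))"
    unfolding A by (rule sum.swap)
  also have "\<dots> = cvinner y (A *v x)"
    by (simp add: cvinner_def matrix_vector_mult_def sum_distrib_left mult_ac)
  finally show ?thesis by simp
qed

lemma hermitian_quadratic_form_real:
  assumes "hermitian A"
  shows "cvinner x (A *v x) = complex_of_real (Re (cvinner x (A *v x)))"
  using hermitian_cvinner_swap[OF assms, of x x] by (simp add: complex_eq_iff)

lemma hermitian_outer: "hermitian (outer w)"
  by (simp add: hermitian_def cadj_def outer_def vec_eq_iff mult.commute)

lemma hermitian_add: "hermitian A \<Longrightarrow> hermitian B \<Longrightarrow> hermitian (A + B)"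
  by (simp add: hermitian_def cadj_def vec_eq_iff)

lemma hermitian_diff: "hermitian A \<Longrightarrow> hermitian B \<Longrightarrow> hermitian (A - B)"
  by (simp add: hermitian_def cadj_def vec_eq_iff)

lemma psd_outer: "psd (outer w)"
  by (simp add: psd_def hermitian_outer cvinner_outer cvinner_self_mult)

lemma psd_add: "psd A \<Longrightarrow> psd B \<Longrightarrow> psd (A + B)"
  by (simp add: psd_def hermitian_add matrix_vector_mult_add_rdistrib cvinner_add_right)

lemma hermitian_quadratic_form_shift:
  fixes x :: "complex^'n"
  assumes "hermitian X" and "cvinner h (X *v h) = complex_of_real a" and "a \<noteq> 0"
  defines "p \<equiv> cvinner h (X *v x)"
  shows "cvinner (x - (p / a) *s h) (X *v (x - (p / a) *s h))
           = cvinner x (X *v x) - p * cnj p / a"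
proof -
  have "cvinner x (X *v h) = cnj p"
    unfolding p_def by (rule hermitian_cvinner_swap[OF assms(1)])
  then show ?thesis
    using assms(2,3)
    by (simp add: p_def matrix_vector_mult_diff_distrib vector_scalar_commute cvinner_diff_left
        cvinner_diff_right cvinner_scale_left cvinner_scale_right field_simps)
qed

lemma deflation_cvinner:
  assumes "cvinner h (X *v h) = complex_of_real a" and "a > 0"
  shows "cvinner h (complex_of_real (1 / sqrt a) *s (X *v h)) = complex_of_real (sqrt a)"
  using assms by (simp add: cvinner_scale_right real_div_sqrt flip: of_real_mult of_real_divide)

lemma deflation_null:
  assumes "cvinner h (X *v h) = complex_of_real a" and "a > 0"
  defines "w \<equiv> complex_of_real (1 / sqrt a) *s (X *v h)"
  shows "cvinner h ((X - outer w) *v h) = 0"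
proof -
  have "cvinner h w = complex_of_real (sqrt a)"
    unfolding w_def using assms(1,2) by (rule deflation_cvinner)
  then show ?thesis
    using assms(1,2) cvinner_commute[of w h]
    by (simp add: matrix_vector_mult_diff_rdistrib cvinner_diff_right cvinner_outer
        flip: of_real_mult)
qed

lemma psd_deflation:
  assumes "psd X" and "cvinner h (X *v h) = complex_of_real a" and "a > 0"
  defines "w \<equiv> complex_of_real (1 / sqrt a) *s (X *v h)"
  shows "psd (X - outer w)"
  unfolding psd_def
proof (intro conjI allI)
  have X: "hermitian X" using assms(1) by (simp add: psd_def)
  then show "hermitian (X - outer w)" by (simp add: hermitian_diff hermitian_outer)
  fix x
  define p where "p = cvinner h (X *v x)"
  have "cvinner x (X *v h) = cnj p"
    unfolding p_def by (rule hermitian_cvinner_swap[OF X])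
  then have "cvinner x w = complex_of_real (1 / sqrt a) * cnj p"
    by (simp add: w_def cvinner_scale_right)
  moreover from this have "cvinner w x = complex_of_real (1 / sqrt a) * p"
    using cvinner_commute[of w x] by simp
  ultimately have "cvinner x w * cvinner w x
               = complex_of_real (1 / sqrt a * (1 / sqrt a)) * (p * cnj p)"
    unfolding of_real_mult by (simp only: ac_simps)
  also have "\<dots> = p * cnj p / a"
    using assms(3) by (simp add: divide_simps)
  finally have "cvinner x w * cvinner w x = p * cnj p / a" .
  \<comment> \<open>the form of \<open>X - w w\<^sup>H\<close> at \<open>x\<close> is that of \<open>X\<close> at the part of \<open>x\<close> \<open>X\<close>-orthogonal to \<open>h\<close>\<close>
  then have "cvinner x ((X - outer w) *v x)
               = cvinner (x - (p / a) *s h) (X *v (x - (p / a) *s h))"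
    using hermitian_quadratic_form_shift[OF X assms(2)] assms(3)
    by (simp add: p_def matrix_vector_mult_diff_rdistrib cvinner_diff_right cvinner_outer)
  then show "0 \<le> Re (cvinner x ((X - outer w) *v x))"
    using assms(1) by (simp add: psd_def)
qed

lemma P11_feasible_imp_SDR12_feasible:
  assumes "\<Gamma> > 0" and "\<sigma>2 > 0" and "P11_feasible h \<Gamma> \<sigma>2 P0 w R"
  shows "SDR12_feasible h \<Gamma> \<sigma>2 P0 (outer w) R"
proof -
  define s where "s = (cmod (cvinner h w))\<^sup>2"
  define r where "r = Re (cvinner h (R *v h))"
  have R: "psd R" and sinr: "\<Gamma> \<le> s / (r + \<sigma>2)"
    and power: "cvnorm2 w + Re (trace R) \<le> P0"
    using assms(3) unfolding P11_feasible_def s_def r_def by auto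
  have "r \<ge> 0" using R by (simp add: psd_def r_def)
  with sinr assms(1,2) have "r + \<sigma>2 \<le> s / \<Gamma>"
    by (simp add: pos_le_divide_eq mult.commute)
  moreover have "Re (trace (outer h ** outer w)) = s"
    by (simp add: trace_outer_mult cvinner_outer cvinner_self_mult s_def)
  moreover have "Re (trace (outer h ** (outer w + R))) = s + r"
    by (simp add: trace_outer_mult matrix_vector_mult_add_rdistrib cvinner_add_right
        cvinner_outer cvinner_self_mult s_def r_def)
  ultimately show ?thesis
    using R power by (simp add: SDR12_feasible_def psd_outer Re_trace_outer algebra_simps)
qed

lemma SDR12_feasible_user_gain:
  assumes "\<Gamma> > 0" and "SDR12_feasible h \<Gamma> \<sigma>2 P0 W R"
  shows "\<Gamma> * (Re (cvinner h (R *v h)) + \<sigma>2) \<le> Re (cvinner h (W *v h))"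
proof -
  have "Re (cvinner h (R *v h)) + \<sigma>2 \<le> Re (cvinner h (W *v h)) / \<Gamma>"
    using assms(2)
    by (simp add: SDR12_feasible_def trace_outer_mult matrix_vector_mult_add_rdistrib
        cvinner_add_right algebra_simps)
  then show ?thesis
    using assms(1) by (simp add: pos_le_divide_eq mult.commute)
qed

lemma SDR12_feasible_imp_P11_feasible_null:
  assumes "\<Gamma> > 0" and "\<sigma>2 > 0" and "SDR12_feasible h \<Gamma> \<sigma>2 P0 W R"
  obtains w R0 where "P11_feasible h \<Gamma> \<sigma>2 P0 w R0" and "outer w + R0 = W + R"
    and "cvinner h (R0 *v h) = 0"
proof -
  define X where "X = W + R"
  define a where "a = Re (cvinner h (X *v h))"
  define w where "w = complex_of_real (1 / sqrt a) *s (X *v h)"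
  define R0 where "R0 = X - outer w"
  have "psd W" and R: "psd R" and power: "Re (trace W) + Re (trace R) \<le> P0"
    using assms(3) by (auto simp: SDR12_feasible_def)
  then have X: "psd X" by (simp add: X_def psd_add)
  have ha: "cvinner h (X *v h) = complex_of_real a"
    using X by (simp add: a_def psd_def flip: hermitian_quadratic_form_real)
  have "Re (cvinner h (R *v h)) \<ge> 0" using R by (simp add: psd_def)
  with SDR12_feasible_user_gain[OF assms(1,3)] assms(1)
  have gain: "\<Gamma> * \<sigma>2 \<le> a"
    by (simp add: a_def X_def matrix_vector_mult_add_rdistrib cvinner_add_right)
       (smt (verit) mult_left_mono)
  with assms(1,2) have "a > 0" by (smt (verit) mult_pos_pos)
  have null: "cvinner h (R0 *v h) = 0"
    unfolding R0_def w_def using ha \<open>a > 0\<close> by (rule deflation_null)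
  have "P11_feasible h \<Gamma> \<sigma>2 P0 w R0"
    unfolding P11_feasible_def
  proof (intro conjI)
    show "psd R0" unfolding R0_def w_def using X ha \<open>a > 0\<close> by (rule psd_deflation)
    have "cvinner h w = complex_of_real (sqrt a)"
      unfolding w_def using ha \<open>a > 0\<close> by (rule deflation_cvinner)
    then show "\<Gamma> \<le> (cmod (cvinner h w))\<^sup>2 / (Re (cvinner h (R0 *v h)) + \<sigma>2)"
      using null gain \<open>a > 0\<close> assms(2) by (simp add: pos_le_divide_eq)
    show "cvnorm2 w + Re (trace R0) \<le> P0"
      using power by (simp add: R0_def X_def trace_sub trace_add flip: Re_trace_outer)
  qed
  moreover have "outer w + R0 = W + R" by (simp add: R0_def X_def)
  ultimately show thesis using null that by blast
qed

theorem proposition4: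
  fixes G :: "complex^'m^'n" and hd1 :: "complex^'m" and hr1 :: "complex^'n"
    and v :: "complex^'n" and \<Gamma> \<sigma>2 P0 :: real
  assumes "\<Gamma> > 0" and "\<sigma>2 > 0" and "P0 > 0"
    and "\<forall>n. cmod (v $ n) = 1"
    and "\<exists>W1 R0. SDR12_feasible (eff_channel G hd1 hr1 v) \<Gamma> \<sigma>2 P0 W1 R0 \<and>
           (\<forall>W1' R0'. SDR12_feasible (eff_channel G hd1 hr1 v) \<Gamma> \<sigma>2 P0 W1' R0' \<longrightarrow>
              fobj G (W1 + R0) \<le> fobj G (W1' + R0'))"
  shows "\<exists>w1 R0. P11_feasible (eff_channel G hd1 hr1 v) \<Gamma> \<sigma>2 P0 w1 R0 \<and>
           (\<forall>w1' R0'. P11_feasible (eff_channel G hd1 hr1 v) \<Gamma> \<sigma>2 P0 w1' R0' \<longrightarrow>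
              fobj G (outer w1 + R0) \<le> fobj G (outer w1' + R0')) \<and>
           cvinner (eff_channel G hd1 hr1 v) (R0 *v eff_channel G hd1 hr1 v) = 0"
proof -
  define h where "h = eff_channel G hd1 hr1 v"
  obtain W R where feasible: "SDR12_feasible h \<Gamma> \<sigma>2 P0 W R"
    and optimal: "\<And>W' R'. SDR12_feasible h \<Gamma> \<sigma>2 P0 W' R' \<Longrightarrow> fobj G (W + R) \<le> fobj G (W' + R')"
    using assms(5) unfolding h_def[symmetric] by blast
  obtain w R0 where "P11_feasible h \<Gamma> \<sigma>2 P0 w R0" and same_sum: "outer w + R0 = W + R"
    and "cvinner h (R0 *v h) = 0"
    using SDR12_feasible_imp_P11_feasible_null[OF assms(1,2) feasible] .
  moreover have "fobj G (outer w + R0) \<le> fobj G (outer w' + R0')"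
    if "P11_feasible h \<Gamma> \<sigma>2 P0 w' R0'" for w' R0'
    using optimal[OF P11_feasible_imp_SDR12_feasible[OF assms(1,2) that]] same_sum by simp
  ultimately show ?thesis unfolding h_def[symmetric] by blast
qed

end
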